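(* Let $(M,J,g)$ be a $2n$-dimensional Kähler manifold which is an asymptotic harmonic manifold up to order 2, with constants $\Lambda_1,\Lambda_2$. Then $$\Lambda_1^2-\frac{2(n+1)^2}{n+7}\Lambda_2\le 0,$$ and equality holds if and only if $M$ has constant holomorphic sectional curvature $\frac{\tau}{n(n+1)}$.
   Context: Conventions: $R(X,Y)Z=[\nabla_X,\nabla_Y]Z-\nabla_{[X,Y]}Z$; components w.r.t. a local orthonormal frame, $R_{abcd}=g(R(e_a,e_b)e_c,e_d)$, $\rho_{ij}=R_{aija}$, $\tau=\rho_{aa}$, summation over repeated indices. For $x=\xi^ie_i\in T_pM$ write $R_{axxb}=R_{aijb}\xi^i\xi^j$. A Riemannian manifold is an asymptotic harmonic manifold up to order 2 if there are real constants $\Lambda_1,\Lambda_2$ (independent of the point) such that for every $p\in M$ and every $x\in T_pM$: $R_{axxa}=\Lambda_1|x|^2$ and $R_{axxb}R_{bxxa}=\Lambda_2|x|^4$. *)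

theory Defs
  imports "HOL-Analysis.Analysis"
begin

text \<open>Pointwise (frame) model of a 2n-dimensional Kaehler manifold.
  Each tangent space T_pM is identified, via a local orthonormal frame e_1..e_{2n},
  with real^'d carrying the standard inner product; the frame vectors are the
  standard basis vectors axis a 1.  The curvature of M at p is given by its
  components Rc p a b c d = g(R(e_a,e_b)e_c,e_d), and J p is the complex structure
  on T_pM expressed in that frame.\<close>

type_synonym ('p,'d) curv = "'p \<Rightarrow> 'd \<Rightarrow> 'd \<Rightarrow> 'd \<Rightarrow> 'd \<Rightarrow> real"

definition frame :: "'d::finite \<Rightarrow> real^'d" where
  "frame a = axis a 1"

definition Rform :: "('d::finite \<Rightarrow> 'd \<Rightarrow> 'd \<Rightarrow> 'd \<Rightarrow> real)
    \<Rightarrow> real^'d \<Rightarrow> real^'d \<Rightarrow> real^'d \<Rightarrow> real^'d \<Rightarrow> real" where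
  "Rform R x y z w = (\<Sum>a\<in>UNIV. \<Sum>b\<in>UNIV. \<Sum>c\<in>UNIV. \<Sum>d\<in>UNIV.
      R a b c d * (x $ a) * (y $ b) * (z $ c) * (w $ d))"

definition curvature_tensor :: "('d::finite \<Rightarrow> 'd \<Rightarrow> 'd \<Rightarrow> 'd \<Rightarrow> real) \<Rightarrow> bool" where
  "curvature_tensor R \<longleftrightarrow>
     (\<forall>a b c d. R a b c d = - R b a c d) \<and>
     (\<forall>a b c d. R a b c d = - R a b d c) \<and>
     (\<forall>a b c d. R a b c d + R b c a d + R c a b d = 0)"

definition hermitian_structure :: "(real^'d::finite \<Rightarrow> real^'d) \<Rightarrow> bool" where
  "hermitian_structure J \<longleftrightarrow> linear J \<and> (\<forall>x. J (J x) = - x) \<and>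
     (\<forall>x y. J x \<bullet> J y = x \<bullet> y)"

text \<open>Kaehler curvature identity R(X,Y)JZ = J R(X,Y)Z, i.e. R(x,y,Jz,Jw) = R(x,y,z,w).\<close>
definition kaehler_curvature ::
  "('d::finite \<Rightarrow> 'd \<Rightarrow> 'd \<Rightarrow> 'd \<Rightarrow> real) \<Rightarrow> (real^'d \<Rightarrow> real^'d) \<Rightarrow> bool" where
  "kaehler_curvature R J \<longleftrightarrow> curvature_tensor R \<and> hermitian_structure J \<and>
     (\<forall>x y z w. Rform R x y (J z) (J w) = Rform R x y z w)"

definition scalar_curv :: "('d::finite \<Rightarrow> 'd \<Rightarrow> 'd \<Rightarrow> 'd \<Rightarrow> real) \<Rightarrow> real" where
  "scalar_curv R = (\<Sum>a\<in>UNIV. \<Sum>i\<in>UNIV. R a i i a)"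

definition asymptotic_harmonic2 ::
  "'p set \<Rightarrow> ('p,'d::finite) curv \<Rightarrow> real \<Rightarrow> real \<Rightarrow> bool" where
  "asymptotic_harmonic2 M R L1 L2 \<longleftrightarrow>
     (\<forall>p\<in>M. \<forall>x::real^'d.
        (\<Sum>a\<in>UNIV. Rform (R p) (frame a) x x (frame a)) = L1 * norm x ^ 2 \<and>
        (\<Sum>a\<in>UNIV. \<Sum>b\<in>UNIV. Rform (R p) (frame a) x x (frame b) *
                                Rform (R p) (frame b) x x (frame a)) = L2 * norm x ^ 4)"

definition const_holo_sec_curv ::
  "('d::finite \<Rightarrow> 'd \<Rightarrow> 'd \<Rightarrow> 'd \<Rightarrow> real) \<Rightarrow> (real^'d \<Rightarrow> real^'d) \<Rightarrow> real \<Rightarrow> bool" where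
  "const_holo_sec_curv R J c \<longleftrightarrow> (\<forall>x. Rform R x (J x) (J x) x = c * norm x ^ 4)"

end

theory Submission
  imports Defs
begin

text \<open>At every point the first asymptotic harmonicity condition makes the Ricci tensor equal to
  \<open>\<Lambda>\<^sub>1 g\<close>, so \<open>\<tau> = m\<Lambda>\<^sub>1\<close> with \<open>m = 2n\<close>; polarising the second one at \<open>e\<^sub>i \<plusminus> e\<^sub>j\<close> and tracing gives
  \<open>2m\<Lambda>\<^sub>1\<^sup>2 + 3|R|\<^sup>2 = (2m\<^sup>2 + 4m)\<Lambda>\<^sub>2\<close>.  Let \<open>R\<^sub>0\<close> be the Kaehler curvature tensor of constant
  holomorphic sectional curvature 4.  For a Kaehler curvature tensor \<open>\<langle>R, R\<^sub>0\<rangle> = 8\<tau>\<close>, so the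
  defect \<open>D = R - \<tau>/(m(m+2)) R\<^sub>0\<close> satisfies \<open>|D|\<^sup>2 = |R|\<^sup>2 - 8\<tau>\<^sup>2/(m(m+2))\<close>.  Eliminating
  \<open>|R|\<^sup>2\<close> yields \<open>\<Lambda>\<^sub>1\<^sup>2 - 2(n+1)\<^sup>2/(n+7) \<Lambda>\<^sub>2 = -3(n+1)/(4n(n+7)) |D|\<^sup>2 \<le> 0\<close>.  Equality means
  \<open>D = 0\<close>, and since a Kaehler curvature tensor is determined by its holomorphic sectional
  curvatures, this is equivalent to constant holomorphic sectional curvature \<open>\<tau>/(n(n+1))\<close>.\<close>

section \<open>Multilinear forms in an orthonormal frame\<close>

lemma frame_nth: "frame a $ i = (if i = a then 1 else 0)"
  by (simp add: frame_def axis_def)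

lemma inner_frame: "frame a \<bullet> frame b = (if a = b then 1 else 0)"
  by (simp add: frame_def inner_axis_axis)

lemma inner_frame_left: "frame a \<bullet> x = x $ a"
  by (simp add: frame_def inner_axis')

lemma inner_frame_right: "x \<bullet> frame a = x $ a"
  by (simp add: frame_def inner_axis)

lemma norm_frame: "norm (frame a :: real^'d::finite) = 1"
  by (simp add: frame_def)

lemma frame_expansion: "(\<Sum>a\<in>UNIV. (x $ a) *\<^sub>R frame a) = x"
  using basis_expansion[of x] by (simp add: frame_def scalar_mult_eq_scaleR)

lemma sum_frame_mult: "(\<Sum>i\<in>UNIV. frame a $ i * g i) = (g a :: real)"
  by (subst sum.cong[OF refl, of _ _ "\<lambda>i. if i = a then g a else 0"]) (auto simp: frame_nth)

lemma sum_delta_mult: "(\<Sum>l\<in>UNIV. (if k = l then 1 else 0) * g l) = (g (k::'d::finite) :: real)"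
  by (subst sum.cong[OF refl, of _ _ "\<lambda>l. if l = k then g k else 0"]) auto

lemma linear_functional_frame_expansion:
  assumes "linear (f :: real^'d::finite \<Rightarrow> real)"
  shows "f x = (\<Sum>a\<in>UNIV. x $ a * f (frame a))"
proof -
  have "f x = f (\<Sum>a\<in>UNIV. (x $ a) *\<^sub>R frame a)" by (simp only: frame_expansion)
  also have "\<dots> = (\<Sum>a\<in>UNIV. x $ a * f (frame a))"
    using assms by (simp add: linear_sum linear_cmul)
  finally show ?thesis .
qed

lemma Rform_expand_first: "Rform R x y z w = (\<Sum>a\<in>UNIV. x $ a * (\<Sum>b\<in>UNIV. \<Sum>c\<in>UNIV. \<Sum>d\<in>UNIV.
      R a b c d * (y $ b) * (z $ c) * (w $ d)))"
  unfolding Rform_def by (simp add: sum_distrib_left mult_ac)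

lemma Rform_frame_first: "Rform R (frame a) y z w = (\<Sum>b\<in>UNIV. \<Sum>c\<in>UNIV. \<Sum>d\<in>UNIV.
      R a b c d * (y $ b) * (z $ c) * (w $ d))"
  unfolding Rform_expand_first by (rule sum_frame_mult)

lemma Rform_perm_12: "Rform R x y z w = Rform (\<lambda>a b c d. R b a c d) y x z w"
  unfolding Rform_def by (subst sum.swap) (simp add: mult_ac)

lemma Rform_perm_34: "Rform R x y z w = Rform (\<lambda>a b c d. R a b d c) x y w z"
  unfolding Rform_def by (subst (2) sum.swap) (simp add: mult_ac)

lemma Rform_perm_23: "Rform R x y z w = Rform (\<lambda>a b c d. R a c b d) x z y w"
  unfolding Rform_def by (subst (2) sum.swap) (simp add: mult_ac)

lemma Rform_perm_13: "Rform R x y z w = Rform (\<lambda>a b c d. R c b a d) z y x w"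
  by (subst Rform_perm_12, subst Rform_perm_23, subst Rform_perm_12) simp

lemma Rform_perm_14: "Rform R x y z w = Rform (\<lambda>a b c d. R d b c a) w y z x"
  by (subst Rform_perm_34, subst Rform_perm_13, subst Rform_perm_34) simp

lemma Rform_perm_24: "Rform R x y z w = Rform (\<lambda>a b c d. R a d c b) x w z y"
  by (subst Rform_perm_12, subst Rform_perm_14, subst Rform_perm_12) simp

lemma Rform_expand_1: "Rform R x y z w = (\<Sum>a\<in>UNIV. x $ a * Rform R (frame a) y z w)"
  unfolding Rform_frame_first by (rule Rform_expand_first)

lemma Rform_expand_2: "Rform R x y z w = (\<Sum>a\<in>UNIV. y $ a * Rform R x (frame a) z w)"
  by (subst Rform_perm_12, subst Rform_expand_1, subst (2) Rform_perm_12) simp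

lemma Rform_expand_3: "Rform R x y z w = (\<Sum>a\<in>UNIV. z $ a * Rform R x y (frame a) w)"
  by (subst Rform_perm_13, subst Rform_expand_1, subst (2) Rform_perm_13) simp

lemma Rform_expand_4: "Rform R x y z w = (\<Sum>a\<in>UNIV. w $ a * Rform R x y z (frame a))"
  by (subst Rform_perm_14, subst Rform_expand_1, subst (2) Rform_perm_14) simp

lemma Rform_frame: "Rform R (frame a) (frame b) (frame c) (frame d) = R a b c d"
proof -
  have "Rform R (frame a) (frame b) (frame c) (frame d) =
     (\<Sum>b'\<in>UNIV. frame b $ b' * (\<Sum>c'\<in>UNIV. frame c $ c' * (\<Sum>d'\<in>UNIV. frame d $ d' * R a b' c' d')))"
    unfolding Rform_frame_first by (simp add: sum_distrib_left mult_ac)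
  also have "\<dots> = R a b c d" by (simp add: sum_frame_mult)
  finally show ?thesis .
qed

lemma Rform_frame_frame_frame: "Rform R (frame a) (frame b) (frame c) v = (\<Sum>d\<in>UNIV. v $ d * R a b c d)"
  by (subst Rform_expand_4) (simp add: Rform_frame)

lemma Rform_frame_frame: "Rform R (frame a) (frame b) u v = (\<Sum>c\<in>UNIV. u $ c * (\<Sum>d\<in>UNIV. v $ d * R a b c d))"
  by (subst Rform_expand_3) (simp add: Rform_frame_frame_frame)

lemma Rform_add_1: "Rform R (x + x') y z w = Rform R x y z w + Rform R x' y z w"
  and Rform_add_2: "Rform R x (y + y') z w = Rform R x y z w + Rform R x y' z w"
  and Rform_add_3: "Rform R x y (z + z') w = Rform R x y z w + Rform R x y z' w"
  and Rform_add_4: "Rform R x y z (w + w') = Rform R x y z w + Rform R x y z w'"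
  unfolding Rform_def by (simp_all add: algebra_simps sum.distrib)

lemma Rform_minus_1: "Rform R (- x) y z w = - Rform R x y z w"
  and Rform_minus_2: "Rform R x (- y) z w = - Rform R x y z w"
  and Rform_minus_3: "Rform R x y (- z) w = - Rform R x y z w"
  and Rform_minus_4: "Rform R x y z (- w) = - Rform R x y z w"
  unfolding Rform_def by (simp_all add: sum_negf)

lemma Rform_diff_1: "Rform R (x - x') y z w = Rform R x y z w - Rform R x' y z w"
  and Rform_diff_2: "Rform R x (y - y') z w = Rform R x y z w - Rform R x y' z w"
  and Rform_diff_3: "Rform R x y (z - z') w = Rform R x y z w - Rform R x y z' w"
  and Rform_diff_4: "Rform R x y z (w - w') = Rform R x y z w - Rform R x y z w'"
  by (simp_all only: diff_conv_add_uminus Rform_add_1 Rform_add_2 Rform_add_3 Rform_add_4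
      Rform_minus_1 Rform_minus_2 Rform_minus_3 Rform_minus_4)

lemmas Rform_linear_simps = Rform_add_1 Rform_add_2 Rform_add_3 Rform_add_4
  Rform_minus_1 Rform_minus_2 Rform_minus_3 Rform_minus_4
  Rform_diff_1 Rform_diff_2 Rform_diff_3 Rform_diff_4

lemma Rform_tensor_add:
  "Rform (\<lambda>a b c d. R a b c d + S a b c d) x y z w = Rform R x y z w + Rform S x y z w"
  unfolding Rform_def by (simp add: algebra_simps sum.distrib)

lemma Rform_tensor_diff_scale:
  "Rform (\<lambda>a b c d. R a b c d - k * S a b c d) x y z w = Rform R x y z w - k * Rform S x y z w"
  unfolding Rform_def by (simp add: algebra_simps sum_subtractf sum_distrib_left)

lemma Rform_tensor_minus: "Rform (\<lambda>a b c d. - R a b c d) x y z w = - Rform R x y z w"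
  unfolding Rform_def by (simp add: sum_negf)

lemma Rform_tensor_zero: "Rform (\<lambda>a b c d. 0) x y z w = 0"
  unfolding Rform_def by simp

section \<open>Algebraic curvature tensors\<close>

lemma curvature_tensor_skew_12: "curvature_tensor R \<Longrightarrow> R b a c d = - R a b c d"
  and curvature_tensor_skew_34: "curvature_tensor R \<Longrightarrow> R a b d c = - R a b c d"
  and curvature_tensor_bianchi: "curvature_tensor R \<Longrightarrow> R a b c d + R b c a d + R c a b d = 0"
  unfolding curvature_tensor_def by metis+

lemma curvature_tensor_pair_sym:
  assumes C: "curvature_tensor R"
  shows "R c d a b = R a b c d"
proof -
  note s1 = curvature_tensor_skew_12[OF C] and s2 = curvature_tensor_skew_34[OF C]
    and b = curvature_tensor_bianchi[OF C]
  show ?thesis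
    using b[of a b c d] b[of b c d a] b[of c d a b] b[of d a b c]
      s1[of a b c d] s1[of b c a d] s1[of c a b d] s1[of b c d a] s1[of c d b a] s1[of d b c a]
      s1[of c d a b] s1[of d a c b] s1[of a c d b] s1[of d a b c] s1[of a b d c] s1[of b d a c]
      s2[of a b c d] s2[of b c a d] s2[of c a b d] s2[of b c d a] s2[of c d b a] s2[of d b c a]
      s2[of c d a b] s2[of d a c b] s2[of a c d b] s2[of d a b c] s2[of a b d c] s2[of b d a c]
    by linarith
qed

lemma curvature_tensor_bianchi_234:
  assumes C: "curvature_tensor R"
  shows "R a i j b + R a j b i + R a b i j = 0"
  using curvature_tensor_bianchi[OF C, of j b i a] curvature_tensor_pair_sym[OF C, of a i j b]
    curvature_tensor_pair_sym[OF C, of a j b i] curvature_tensor_pair_sym[OF C, of a b i j]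
    curvature_tensor_skew_34[OF C, of j b a i] curvature_tensor_skew_34[OF C, of b i a j]
    curvature_tensor_skew_34[OF C, of i j a b]
  by linarith

lemma curvature_tensor_diff_scale:
  assumes CR: "curvature_tensor R" and CT: "curvature_tensor T"
  shows "curvature_tensor (\<lambda>a b c d. R a b c d - k * T a b c d)"
  unfolding curvature_tensor_def
proof (intro conjI allI)
  fix a b c d
  show "R a b c d - k * T a b c d = - (R b a c d - k * T b a c d)"
    using curvature_tensor_skew_12[OF CR, of b a c d] curvature_tensor_skew_12[OF CT, of b a c d]
    by simp
  show "R a b c d - k * T a b c d = - (R a b d c - k * T a b d c)"
    using curvature_tensor_skew_34[OF CR, of a b d c] curvature_tensor_skew_34[OF CT, of a b d c]
    by simp
  have "k * (T a b c d + T b c a d + T c a b d) = 0"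
    using curvature_tensor_bianchi[OF CT] by simp
  then show "R a b c d - k * T a b c d + (R b c a d - k * T b c a d) + (R c a b d - k * T c a b d) = 0"
    using curvature_tensor_bianchi[OF CR, of a b c d] by (simp add: algebra_simps)
qed

lemma Rform_skew_12: "curvature_tensor R \<Longrightarrow> Rform R y x z w = - Rform R x y z w"
proof -
  assume C: "curvature_tensor R"
  have "(\<lambda>a b c d. R b a c d) = (\<lambda>a b c d. - R a b c d)"
    using curvature_tensor_skew_12[OF C] by (intro ext) metis
  then show ?thesis by (subst Rform_perm_12) (simp only: Rform_tensor_minus)
qed

lemma Rform_skew_34: "curvature_tensor R \<Longrightarrow> Rform R x y w z = - Rform R x y z w"
proof -
  assume C: "curvature_tensor R"
  have "(\<lambda>a b c d. R a b d c) = (\<lambda>a b c d. - R a b c d)"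
    using curvature_tensor_skew_34[OF C] by (intro ext) metis
  then show ?thesis by (subst Rform_perm_34) (simp only: Rform_tensor_minus)
qed

lemma Rform_pair_sym: "curvature_tensor R \<Longrightarrow> Rform R z w x y = Rform R x y z w"
proof -
  assume C: "curvature_tensor R"
  have "(\<lambda>a b c d. R c d a b) = R"
    using curvature_tensor_pair_sym[OF C] by (intro ext) metis
  then show ?thesis by (subst Rform_perm_13, subst Rform_perm_24) simp
qed

lemma Rform_bianchi:
  assumes C: "curvature_tensor R"
  shows "Rform R x y z w + Rform R y z x w + Rform R z x y w = 0"
proof -
  have e1: "Rform R y z x w = Rform (\<lambda>a b c d. R b c a d) x y z w"
    using Rform_perm_13[of R y z x w] Rform_perm_23[of "\<lambda>a b c d. R c b a d" x z y w] by simp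
  have e2: "Rform R z x y w = Rform (\<lambda>a b c d. R c a b d) x y z w"
    using Rform_perm_12[of R z x y w] Rform_perm_23[of "\<lambda>a b c d. R b a c d" x z y w] by simp
  have "Rform R x y z w + Rform R y z x w + Rform R z x y w =
     Rform (\<lambda>a b c d. R a b c d + R b c a d + R c a b d) x y z w"
    unfolding e1 e2 Rform_tensor_add[symmetric] by simp
  also have "\<dots> = 0" using curvature_tensor_bianchi[OF C] by (simp add: Rform_tensor_zero)
  finally show ?thesis .
qed

lemma curvature_tensor_eq_0_if_sectional_0:
  assumes C: "curvature_tensor D"
    and Z: "\<And>x y. Rform D x y y x = 0"
  shows "D a b c d = 0"
proof -
  let ?F = "Rform D"
  note s12 = Rform_skew_12[OF C] and s34 = Rform_skew_34[OF C] and pr = Rform_pair_sym[OF C]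
  have outer_eq: "?F x y z x = 0" for x y z
  proof -
    have "?F x y z x + ?F x z y x = 0"
      using Z[of x "y + z"] Z[of x y] Z[of x z] by (simp add: Rform_linear_simps)
    moreover have "?F x z y x = ?F x y z x"
      using pr[of y x x z] s12[of x y z x] s34[of y x z x] by simp
    ultimately show ?thesis by simp
  qed
  have skew: "?F x y z w = - ?F w y z x" for x y z w
    using outer_eq[of "x + w" y z] outer_eq[of x y z] outer_eq[of w y z] by (simp add: Rform_linear_simps)
  have "?F x y z w = ?F x w y z" for x y z w
    using skew[of x y z w] s12[of w y z x] skew[of y w z x] s34[of x w z y] by simp
  then have cyc: "D a b c d = D a d b c" for a b c d
    using Rform_frame by metis
  show ?thesis
    using curvature_tensor_bianchi_234[OF C, of a b c d] cyc[of a b c d] cyc[of a c d b] by linarith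
qed

section \<open>Hermitian structures and Kaehler curvature tensors\<close>

lemma hermitian_J_J: "hermitian_structure J \<Longrightarrow> J (J x) = - x"
  and hermitian_inner: "hermitian_structure J \<Longrightarrow> J x \<bullet> J y = x \<bullet> y"
  by (simp_all add: hermitian_structure_def)

lemma hermitian_add: "hermitian_structure J \<Longrightarrow> J (x + y) = J x + J y"
  and hermitian_diff: "hermitian_structure J \<Longrightarrow> J (x - y) = J x - J y"
  and hermitian_scaleR: "hermitian_structure J \<Longrightarrow> J (c *\<^sub>R x) = c *\<^sub>R J x"
  by (simp_all add: hermitian_structure_def linear_add linear_diff linear_cmul)

lemma hermitian_skew: "hermitian_structure J \<Longrightarrow> J x \<bullet> y = - (x \<bullet> J y)"
  using hermitian_inner[of J "J x" y] by (simp add: hermitian_J_J)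

lemma hermitian_orthogonal: "hermitian_structure J \<Longrightarrow> J x \<bullet> x = 0"
  using hermitian_skew[of J x x] by (simp add: inner_commute)

lemma hermitian_frame_nth: "hermitian_structure J \<Longrightarrow> J (frame a) $ k = - (J (frame k) $ a)"
  using hermitian_skew[of J "frame a" "frame k"] by (simp add: inner_frame_right inner_frame_left)

lemma hermitian_frame_rows:
  "hermitian_structure J \<Longrightarrow> (\<Sum>i\<in>UNIV. J (frame k) $ i * J (frame l) $ i) = (if k = l then 1 else 0)"
  using hermitian_inner[of J "frame k" "frame l"] inner_frame[of k l] by (simp add: inner_vec_def)

lemma hermitian_frame_cols:
  "hermitian_structure J \<Longrightarrow> (\<Sum>a\<in>UNIV. J (frame a) $ k * J (frame a) $ l) = (if k = l then 1 else 0)"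
  using hermitian_frame_rows[of J k l] by (simp add: hermitian_frame_nth[of J _ k] hermitian_frame_nth[of J _ l])

lemma kaehler_curvature_tensor: "kaehler_curvature R J \<Longrightarrow> curvature_tensor R"
  and kaehler_hermitian: "kaehler_curvature R J \<Longrightarrow> hermitian_structure J"
  and kaehler_Rform_J_34: "kaehler_curvature R J \<Longrightarrow> Rform R x y (J z) (J w) = Rform R x y z w"
  by (simp_all add: kaehler_curvature_def)

lemma kaehler_Rform_move_J_34: "kaehler_curvature R J \<Longrightarrow> Rform R x y (J z) w = - Rform R x y z (J w)"
  using kaehler_Rform_J_34[of R J x y z "J w"]
  by (simp add: hermitian_J_J[OF kaehler_hermitian] Rform_minus_4)

lemma kaehler_Rform_J_12: "kaehler_curvature R J \<Longrightarrow> Rform R (J x) (J y) z w = Rform R x y z w"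
  using kaehler_Rform_J_34[of R J z w x y] Rform_pair_sym[OF kaehler_curvature_tensor, of R J]
  by metis

lemma kaehler_curvature_diff_scale:
  assumes KR: "kaehler_curvature R J" and KT: "kaehler_curvature T J"
  shows "kaehler_curvature (\<lambda>a b c d. R a b c d - k * T a b c d) J"
  unfolding kaehler_curvature_def
  using curvature_tensor_diff_scale[OF kaehler_curvature_tensor[OF KR] kaehler_curvature_tensor[OF KT]]
    kaehler_hermitian[OF KR]
  by (simp add: Rform_tensor_diff_scale kaehler_Rform_J_34[OF KR] kaehler_Rform_J_34[OF KT])

lemma kaehler_sectional_0_if_holomorphic_0:
  assumes K: "kaehler_curvature D J"
    and Z: "\<And>x. Rform D x (J x) (J x) x = 0"
  shows "Rform D x y y x = 0"
proof -
  have H: "hermitian_structure J" by (rule kaehler_hermitian[OF K])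
  have C: "curvature_tensor D" by (rule kaehler_curvature_tensor[OF K])
  let ?F = "Rform D"
  note s12 = Rform_skew_12[OF C] and s34 = Rform_skew_34[OF C] and pr = Rform_pair_sym[OF C]
    and k1 = kaehler_Rform_J_34[OF K] and k2 = kaehler_Rform_move_J_34[OF K]
    and k3 = kaehler_Rform_J_12[OF K] and JJ = hermitian_J_J[OF H]
  txt \<open>Polarise the vanishing of \<open>F(x, Jx, Jx, x)\<close> at \<open>x \<plusminus> y\<close>.\<close>
  have sec_J: "?F x y y x + 3 * ?F x (J y) (J y) x = 0" for x y
  proof -
    have e1: "?F x (J x) (J y) y = ?F x y y x + ?F x (J y) (J y) x"
      using Rform_bianchi[OF C, of x "J x" "J y" y] k3[of x y x y] s34[of x y y x]
        k2[of "J y" x x y] s34[of "J y" x "J y" x] s12[of "J y" x "J y" x]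
      by linarith
    have e2: "?F y (J y) (J x) x = ?F x (J x) (J y) y"
      using pr[of "J x" x y "J y"] s12[of x "J x" y "J y"] s34[of x "J x" y "J y"] by simp
    have e3: "?F y (J x) (J x) y = ?F x (J y) (J y) x"
      using k3[of y "J x" "J (J x)" "J y"] k1[of y "J x" "J x" y] JJ[of x] pr[of x "J y" "J y" x]
      by (simp add: Rform_linear_simps)
    have e4: "?F x (J y) (J x) y = ?F x (J y) (J y) x"
      using k2[of x "J y" x y] s34[of x "J y" "J y" x] by simp
    have e5: "?F y (J x) (J y) x = ?F x (J y) (J y) x"
      using k2[of y "J x" y x] s34[of y "J x" "J x" y] e3 by simp
    show ?thesis
      using Z[of "x + y"] Z[of "x - y"] Z[of x] Z[of y] e1 e2 e3 e4 e5
      by (simp add: hermitian_add[OF H] hermitian_diff[OF H] Rform_linear_simps)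
  qed
  show ?thesis
    using sec_J[of x y] sec_J[of x "J y"] by (simp add: JJ Rform_linear_simps)
qed

text \<open>The curvature tensor of constant holomorphic sectional curvature 4 (complex projective space).\<close>

definition holo_model_form :: "(real^'d::finite \<Rightarrow> real^'d) \<Rightarrow> real^'d \<Rightarrow> real^'d \<Rightarrow> real^'d \<Rightarrow> real^'d \<Rightarrow> real" where
  "holo_model_form J x y z w = (x \<bullet> w) * (y \<bullet> z) - (x \<bullet> z) * (y \<bullet> w) + (J x \<bullet> w) * (J y \<bullet> z)
     - (J x \<bullet> z) * (J y \<bullet> w) - 2 * (J x \<bullet> y) * (J z \<bullet> w)"

definition holo_model :: "(real^'d::finite \<Rightarrow> real^'d) \<Rightarrow> 'd \<Rightarrow> 'd \<Rightarrow> 'd \<Rightarrow> 'd \<Rightarrow> real" where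
  "holo_model J a b c d = holo_model_form J (frame a) (frame b) (frame c) (frame d)"

context
  fixes J :: "real^'d::finite \<Rightarrow> real^'d"
  assumes H: "hermitian_structure J"
begin

lemma holo_model_form_linear:
  shows "linear (\<lambda>x. holo_model_form J x y z w)" and "linear (\<lambda>y. holo_model_form J x y z w)"
    and "linear (\<lambda>z. holo_model_form J x y z w)" and "linear (\<lambda>w. holo_model_form J x y z w)"
  unfolding holo_model_form_def
  by (intro linearI; simp add: hermitian_add[OF H] hermitian_scaleR[OF H] algebra_simps)+

lemma Rform_holo_model: "Rform (holo_model J) x y z w = holo_model_form J x y z w"
proof -
  note expand = linear_functional_frame_expansion[OF holo_model_form_linear(4)]
    linear_functional_frame_expansion[OF holo_model_form_linear(3)]
    linear_functional_frame_expansion[OF holo_model_form_linear(2)]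
    linear_functional_frame_expansion[OF holo_model_form_linear(1)]
  have s4: "Rform (holo_model J) (frame a) (frame b) (frame c) w = holo_model_form J (frame a) (frame b) (frame c) w" for a b c
    by (subst Rform_expand_4, subst expand(1)) (simp add: Rform_frame holo_model_def)
  have s3: "Rform (holo_model J) (frame a) (frame b) z w = holo_model_form J (frame a) (frame b) z w" for a b
    by (subst Rform_expand_3, subst expand(2)) (simp add: s4)
  have s2: "Rform (holo_model J) (frame a) y z w = holo_model_form J (frame a) y z w" for a
    by (subst Rform_expand_2, subst expand(3)) (simp add: s3)
  show ?thesis
    by (subst Rform_expand_1, subst expand(4)) (simp add: s2)
qed

lemma holo_model_kaehler: "kaehler_curvature (holo_model J) J"
proof -
  have skew: "J y \<bullet> x = - (J x \<bullet> y)" for x y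
    using hermitian_skew[OF H, of y x] by (simp add: inner_commute)
  have "holo_model_form J y x z w = - holo_model_form J x y z w" for x y z w
    unfolding holo_model_form_def skew[of y x] by (simp add: inner_commute algebra_simps)
  moreover have "holo_model_form J x y w z = - holo_model_form J x y z w" for x y z w
    unfolding holo_model_form_def skew[of w z] by (simp add: inner_commute algebra_simps)
  moreover have "holo_model_form J x y z w + holo_model_form J y z x w + holo_model_form J z x y w = 0"
    for x y z w
    unfolding holo_model_form_def skew[of z x] skew[of y x] skew[of z y]
    by (simp add: inner_commute algebra_simps)
  ultimately have "curvature_tensor (holo_model J)"
    unfolding curvature_tensor_def holo_model_def by blast
  moreover have "holo_model_form J x y (J z) (J w) = holo_model_form J x y z w" for x y z w
    unfolding holo_model_form_def hermitian_J_J[OF H] hermitian_inner[OF H]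
    by (simp add: hermitian_skew[OF H] algebra_simps)
  ultimately show ?thesis
    unfolding kaehler_curvature_def using H by (simp add: Rform_holo_model)
qed

lemma holo_model_form_holomorphic: "holo_model_form J x (J x) (J x) x = 4 * norm x ^ 4"
proof -
  have "norm x ^ 4 = (x \<bullet> x) * (x \<bullet> x)"
    by (simp add: power2_norm_eq_inner[symmetric] power4_eq_xxxx power2_eq_square)
  then show ?thesis
    unfolding holo_model_form_def using hermitian_orthogonal[OF H, of x]
    by (simp add: hermitian_J_J[OF H] hermitian_inner[OF H] inner_commute)
qed

lemma holo_model_frame:
  "holo_model J a b c d = frame a $ d * frame b $ c - frame a $ c * frame b $ d
   + J (frame a) $ d * J (frame b) $ c - J (frame a) $ c * J (frame b) $ d
   - 2 * J (frame a) $ b * J (frame c) $ d"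
  unfolding holo_model_def holo_model_form_def by (simp add: inner_frame_right)

lemma scalar_curv_holo_model: "scalar_curv (holo_model J) = real CARD('d) * (real CARD('d) + 2)"
proof -
  have t: "holo_model J a i i a = 1 - (if a = i then 1 else 0) + 3 * (J (frame a) $ i)^2" for a i
    using hermitian_frame_nth[OF H, of i a] hermitian_frame_nth[OF H, of a a]
    unfolding holo_model_frame by (simp add: frame_nth power2_eq_square)
  have r: "(\<Sum>i\<in>UNIV. (J (frame a) $ i)^2) = 1" for a
    using hermitian_frame_rows[OF H, of a a] by (simp add: power2_eq_square)
  have "scalar_curv (holo_model J) = (\<Sum>a\<in>UNIV. \<Sum>i\<in>UNIV. 1 - (if a = i then 1 else 0) + 3 * (J (frame a) $ i)^2)"
    unfolding scalar_curv_def t ..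
  also have "\<dots> = (\<Sum>a::'d\<in>UNIV. real CARD('d) - 1 + 3)"
    by (simp add: sum.distrib sum_subtractf sum_distrib_left[symmetric] r)
  finally show ?thesis by (simp add: algebra_simps)
qed

end

section \<open>The inner product of curvature tensors\<close>

definition tensor_inner :: "('d::finite \<Rightarrow> 'd \<Rightarrow> 'd \<Rightarrow> 'd \<Rightarrow> real) \<Rightarrow> ('d \<Rightarrow> 'd \<Rightarrow> 'd \<Rightarrow> 'd \<Rightarrow> real) \<Rightarrow> real" where
  "tensor_inner R T = (\<Sum>a\<in>UNIV. \<Sum>b\<in>UNIV. \<Sum>c\<in>UNIV. \<Sum>d\<in>UNIV. R a b c d * T a b c d)"

lemma tensor_inner_self_nonneg: "tensor_inner R R \<ge> 0"
  unfolding tensor_inner_def by (intro sum_nonneg) auto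

lemma tensor_inner_self_eq_0_iff: "tensor_inner R R = 0 \<longleftrightarrow> (\<forall>a b c d. R a b c d = 0)"
  unfolding tensor_inner_def by (simp add: sum_nonneg_eq_0_iff sum_nonneg)

lemma tensor_inner_self_diff_scale:
  "tensor_inner (\<lambda>a b c d. R a b c d - k * T a b c d) (\<lambda>a b c d. R a b c d - k * T a b c d) =
   tensor_inner R R - 2 * k * tensor_inner R T + k^2 * tensor_inner T T"
  unfolding tensor_inner_def
  by (simp add: power2_eq_square sum.distrib sum_subtractf sum_distrib_left algebra_simps)

lemma scalar_curv_Rform:
  "scalar_curv R = (\<Sum>a\<in>UNIV. \<Sum>b\<in>UNIV. Rform R (frame a) (frame b) (frame b) (frame a))"
  by (simp add: scalar_curv_def Rform_frame)

lemma scalar_curv_Rform_skew: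
  assumes "curvature_tensor R"
  shows "(\<Sum>a\<in>UNIV. \<Sum>b\<in>UNIV. Rform R (frame a) (frame b) (frame a) (frame b)) = - scalar_curv R"
proof -
  have "Rform R (frame a) (frame b) (frame a) (frame b) = - Rform R (frame a) (frame b) (frame b) (frame a)" for a b
    by (rule Rform_skew_34[OF assms])
  then show ?thesis by (simp add: scalar_curv_Rform sum_negf)
qed

lemma sum_Rform_J_frame:
  assumes H: "hermitian_structure J"
  shows "(\<Sum>a\<in>UNIV. Rform R (J (frame a)) z (J (frame a)) w) = (\<Sum>k\<in>UNIV. Rform R (frame k) z (frame k) w)"
proof -
  have "Rform R (J (frame a)) z (J (frame a)) w =
      (\<Sum>k\<in>UNIV. \<Sum>l\<in>UNIV. J (frame a) $ k * J (frame a) $ l * Rform R (frame k) z (frame l) w)" for a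
    by (subst Rform_expand_1, subst Rform_expand_3) (simp add: sum_distrib_left mult_ac)
  then have "(\<Sum>a\<in>UNIV. Rform R (J (frame a)) z (J (frame a)) w) =
      (\<Sum>a\<in>UNIV. \<Sum>k\<in>UNIV. \<Sum>l\<in>UNIV. J (frame a) $ k * J (frame a) $ l * Rform R (frame k) z (frame l) w)"
    by simp
  also have "\<dots> = (\<Sum>k\<in>UNIV. \<Sum>l\<in>UNIV. \<Sum>a\<in>UNIV. J (frame a) $ k * J (frame a) $ l * Rform R (frame k) z (frame l) w)"
    by (subst sum.swap, rule sum.cong[OF refl], rule sum.swap)
  also have "\<dots> = (\<Sum>k\<in>UNIV. \<Sum>l\<in>UNIV. (\<Sum>a\<in>UNIV. J (frame a) $ k * J (frame a) $ l) * Rform R (frame k) z (frame l) w)"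
    by (simp only: sum_distrib_right)
  also have "\<dots> = (\<Sum>k\<in>UNIV. Rform R (frame k) z (frame k) w)"
    by (simp add: hermitian_frame_cols[OF H] sum_delta_mult)
  finally show ?thesis .
qed

lemma kaehler_trace_J_J:
  assumes K: "kaehler_curvature R J"
  shows "(\<Sum>a\<in>UNIV. \<Sum>c\<in>UNIV. Rform R (frame a) (J (frame a)) (frame c) (J (frame c))) = - 2 * scalar_curv R"
proof -
  have H: "hermitian_structure J" and C: "curvature_tensor R"
    using K by (simp_all add: kaehler_hermitian kaehler_curvature_tensor)
  have split: "Rform R x (J x) z (J z) = Rform R (J x) z (J x) z - Rform R z x x z" for x z
    using Rform_bianchi[OF C, of x "J x" z "J z"] kaehler_Rform_J_34[OF K, of z x x z]
      kaehler_Rform_move_J_34[OF K, of "J x" z x z]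
    by simp
  have "(\<Sum>a\<in>UNIV. \<Sum>c\<in>UNIV. Rform R (J (frame a)) (frame c) (J (frame a)) (frame c))
      = (\<Sum>c\<in>UNIV. \<Sum>k\<in>UNIV. Rform R (frame k) (frame c) (frame k) (frame c))"
    by (subst sum.swap) (simp add: sum_Rform_J_frame[OF H])
  also have "\<dots> = - scalar_curv R"
    by (subst sum.swap) (rule scalar_curv_Rform_skew[OF C])
  finally have "(\<Sum>a\<in>UNIV. \<Sum>c\<in>UNIV. Rform R (J (frame a)) (frame c) (J (frame a)) (frame c)) = - scalar_curv R" .
  moreover have "(\<Sum>a\<in>UNIV. \<Sum>c\<in>UNIV. Rform R (frame c) (frame a) (frame a) (frame c)) = scalar_curv R"
    by (subst sum.swap) (simp add: scalar_curv_Rform)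
  ultimately show ?thesis
    by (simp add: split sum_subtractf)
qed

lemma tensor_inner_holo_model_frame_pair:
  assumes H: "hermitian_structure J"
  shows "(\<Sum>c\<in>UNIV. \<Sum>d\<in>UNIV. R a b c d * holo_model J a b c d) =
     Rform R (frame a) (frame b) (frame b) (frame a) - Rform R (frame a) (frame b) (frame a) (frame b)
   + Rform R (frame a) (frame b) (J (frame b)) (J (frame a))
   - Rform R (frame a) (frame b) (J (frame a)) (J (frame b))
   - 2 * J (frame a) $ b * (\<Sum>c\<in>UNIV. Rform R (frame a) (frame b) (frame c) (J (frame c)))"
proof -
  have trace_J: "Rform R (frame a) (frame b) (frame c) (J (frame c)) = (\<Sum>d\<in>UNIV. J (frame c) $ d * R a b c d)" for c
    by (rule Rform_frame_frame_frame)
  show ?thesis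
    unfolding trace_J unfolding Rform_frame_frame holo_model_frame[OF H]
    by (simp add: sum_distrib_left sum_subtractf sum.distrib algebra_simps)
qed

lemma tensor_inner_holo_model:
  assumes K: "kaehler_curvature R J"
  shows "tensor_inner R (holo_model J) = 8 * scalar_curv R"
proof -
  have H: "hermitian_structure J" and C: "curvature_tensor R"
    using K by (simp_all add: kaehler_hermitian kaehler_curvature_tensor)
  have trace: "(\<Sum>a\<in>UNIV. \<Sum>b\<in>UNIV. J (frame a) $ b * (\<Sum>c\<in>UNIV. Rform R (frame a) (frame b) (frame c) (J (frame c))))
      = - 2 * scalar_curv R"
  proof -
    have "(\<Sum>c\<in>UNIV. Rform R (frame a) (J (frame a)) (frame c) (J (frame c)))
        = (\<Sum>c\<in>UNIV. \<Sum>b\<in>UNIV. J (frame a) $ b * Rform R (frame a) (frame b) (frame c) (J (frame c)))" for a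
      by (simp only: Rform_expand_2[of R "frame a" "J (frame a)"])
    also have "\<dots> a = (\<Sum>b\<in>UNIV. J (frame a) $ b * (\<Sum>c\<in>UNIV. Rform R (frame a) (frame b) (frame c) (J (frame c))))" for a
      by (subst sum.swap) (simp only: sum_distrib_left)
    finally show ?thesis using kaehler_trace_J_J[OF K] by simp
  qed
  have "tensor_inner R (holo_model J) =
      (\<Sum>a\<in>UNIV. \<Sum>b\<in>UNIV. 2 * Rform R (frame a) (frame b) (frame b) (frame a)
        - 2 * Rform R (frame a) (frame b) (frame a) (frame b)
        - 2 * (J (frame a) $ b * (\<Sum>c\<in>UNIV. Rform R (frame a) (frame b) (frame c) (J (frame c)))))"
    unfolding tensor_inner_def
    using tensor_inner_holo_model_frame_pair[OF H, of R] kaehler_Rform_J_34[OF K] by (simp add: mult.assoc)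
  also have "\<dots> = 2 * scalar_curv R - 2 * (- scalar_curv R) - 2 * (- 2 * scalar_curv R)"
    by (simp only: sum_subtractf sum_distrib_left[symmetric] scalar_curv_Rform[symmetric]
        scalar_curv_Rform_skew[OF C] trace)
  also have "\<dots> = 8 * scalar_curv R" by simp
  finally show ?thesis .
qed

lemma tensor_inner_holo_model_self:
  fixes J :: "real^'d::finite \<Rightarrow> real^'d"
  assumes H: "hermitian_structure J"
  shows "tensor_inner (holo_model J) (holo_model J) = 8 * real CARD('d) * (real CARD('d) + 2)"
  using tensor_inner_holo_model[OF holo_model_kaehler[OF H]] scalar_curv_holo_model[OF H] by simp

section \<open>Consequences of the asymptotic harmonicity conditions\<close>

lemma inner_frame_add_diff:
  "(frame i + frame j) \<bullet> (frame i + frame j) = 2 + 2 * (if i = j then 1 else 0)"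
  "(frame i - frame j) \<bullet> (frame i - frame j) = 2 - 2 * (if i = j then 1 else 0)"
  by (auto simp: inner_add_left inner_add_right inner_diff_left inner_diff_right inner_frame)

lemma ricci_eq_delta:
  assumes C: "curvature_tensor R"
    and L: "\<forall>x::real^'d::finite. (\<Sum>a\<in>UNIV. Rform R (frame a) x x (frame a)) = L1 * norm x ^ 2"
  shows "(\<Sum>a\<in>UNIV. R a i j a) = (if i = j then L1 else 0)"
proof -
  define \<rho> where "\<rho> i j = (\<Sum>a\<in>UNIV. R a i j a)" for i j
  have sym: "\<rho> j i = \<rho> i j" for i j
  proof -
    have "R a j i a = R a i j a" for a
      using curvature_tensor_pair_sym[OF C, of i a a j] curvature_tensor_skew_12[OF C, of i a a j]
        curvature_tensor_skew_34[OF C, of a i a j] by simp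
    then show ?thesis unfolding \<rho>_def by simp
  qed
  have r: "(\<Sum>a\<in>UNIV. Rform R (frame a) (frame i) (frame j) (frame a)) = \<rho> i j" for i j
    unfolding \<rho>_def by (simp add: Rform_frame)
  have diag: "\<rho> i i = L1" for i
    using L[rule_format, of "frame i"] r[of i i] by (simp add: norm_frame)
  have "L1 * norm (frame i + frame j) ^ 2 =
      (\<Sum>a\<in>UNIV. Rform R (frame a) (frame i + frame j) (frame i + frame j) (frame a))"
    using L by simp
  also have "\<dots> = \<rho> i i + \<rho> i j + \<rho> j i + \<rho> j j"
    by (simp add: Rform_add_2 Rform_add_3 sum.distrib r)
  finally have "L1 * (2 + 2 * (if i = j then 1 else 0)) = 2 * L1 + 2 * \<rho> i j"
    using diag sym inner_frame_add_diff(1)[of i j] by (simp add: power2_norm_eq_inner)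
  then show ?thesis unfolding \<rho>_def[symmetric] by (simp split: if_splits)
qed

lemma scalar_curv_eq_if_ricci_eq_delta:
  assumes "\<And>i j. (\<Sum>a\<in>UNIV. R a i j a) = (if i = j then L1 else 0)"
  shows "scalar_curv (R::'d::finite \<Rightarrow> _) = real CARD('d) * L1"
proof -
  have "scalar_curv R = (\<Sum>i\<in>UNIV. \<Sum>a\<in>UNIV. R a i i a)" unfolding scalar_curv_def by (rule sum.swap)
  also have "\<dots> = real CARD('d) * L1" by (simp add: assms)
  finally show ?thesis .
qed

definition jacobi_sq_trace :: "('d::finite \<Rightarrow> 'd \<Rightarrow> 'd \<Rightarrow> 'd \<Rightarrow> real) \<Rightarrow> real^'d \<Rightarrow> real" where
  "jacobi_sq_trace R x = (\<Sum>a\<in>UNIV. \<Sum>b\<in>UNIV. Rform R (frame a) x x (frame b) * Rform R (frame b) x x (frame a))"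

lemma jacobi_sq_trace_polarization:
  "jacobi_sq_trace R (u + v) + jacobi_sq_trace R (u - v) - 2 * jacobi_sq_trace R u - 2 * jacobi_sq_trace R v =
   2 * (\<Sum>a\<in>UNIV. \<Sum>b\<in>UNIV.
      Rform R (frame a) u u (frame b) * Rform R (frame b) v v (frame a)
    + Rform R (frame a) v v (frame b) * Rform R (frame b) u u (frame a)
    + (Rform R (frame a) u v (frame b) + Rform R (frame a) v u (frame b)) *
      (Rform R (frame b) u v (frame a) + Rform R (frame b) v u (frame a)))"
  unfolding jacobi_sq_trace_def sum_distrib_left
  by (simp add: sum.distrib[symmetric] sum_subtractf[symmetric] sum_distrib_left)
    (rule sum.cong[OF refl], rule sum.cong[OF refl], simp add: Rform_linear_simps algebra_simps)

lemma jacobi_sq_trace_frame_polarization: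
  assumes Q: "\<forall>x::real^'d::finite. jacobi_sq_trace R x = L2 * norm x ^ 4"
  shows "(\<Sum>a\<in>UNIV. \<Sum>b\<in>UNIV. R a i i b * R b j j a + R a j j b * R b i i a
     + (R a i j b + R a j i b) * (R b i j a + R b j i a)) = L2 * (2 + 4 * (if i = j then 1 else 0))"
    (is "?F = _")
proof -
  let ?\<delta> = "if i = j then 1 else 0 :: real"
  have norm4: "norm x ^ 4 = (x \<bullet> x)^2" for x :: "real^'d"
    by (simp add: power2_norm_eq_inner[symmetric] power_mult[symmetric])
  have "2 * ?F = jacobi_sq_trace R (frame i + frame j) + jacobi_sq_trace R (frame i - frame j)
      - 2 * jacobi_sq_trace R (frame i) - 2 * jacobi_sq_trace R (frame j)"
    unfolding jacobi_sq_trace_polarization by (simp add: Rform_frame)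
  also have "\<dots> = L2 * ((2 + 2 * ?\<delta>)^2 + (2 - 2 * ?\<delta>)^2 - 4)"
    using Q inner_frame_add_diff[of i j] by (simp add: norm4 inner_frame algebra_simps)
  also have "\<dots> = 2 * (L2 * (2 + 4 * ?\<delta>))"
    by (simp add: power2_eq_square)
  finally show ?thesis by simp
qed

lemma sum4_swap_outer_inner:
  "(\<Sum>i\<in>A. \<Sum>j\<in>B. \<Sum>a\<in>C. \<Sum>b\<in>D. f i j a b) = (\<Sum>a\<in>C. \<Sum>b\<in>D. \<Sum>i\<in>A. \<Sum>j\<in>B. f i j a b)"
proof -
  have "(\<Sum>i\<in>A. \<Sum>j\<in>B. \<Sum>a\<in>C. \<Sum>b\<in>D. f i j a b) = (\<Sum>i\<in>A. \<Sum>a\<in>C. \<Sum>j\<in>B. \<Sum>b\<in>D. f i j a b)"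
    by (rule sum.cong[OF refl], rule sum.swap)
  also have "\<dots> = (\<Sum>a\<in>C. \<Sum>i\<in>A. \<Sum>b\<in>D. \<Sum>j\<in>B. f i j a b)"
    by (subst sum.swap, rule sum.cong[OF refl], rule sum.cong[OF refl], rule sum.swap)
  also have "\<dots> = (\<Sum>a\<in>C. \<Sum>b\<in>D. \<Sum>i\<in>A. \<Sum>j\<in>B. f i j a b)"
    by (rule sum.cong[OF refl], rule sum.swap)
  finally show ?thesis .
qed

lemma sum_ricci_products:
  fixes R :: "'d::finite \<Rightarrow> 'd \<Rightarrow> 'd \<Rightarrow> 'd \<Rightarrow> real"
  assumes C: "curvature_tensor R"
    and Ric: "\<And>i j. (\<Sum>a\<in>UNIV. R a i j a) = (if i = j then L1 else 0)"
  shows "(\<Sum>i\<in>UNIV. \<Sum>j\<in>UNIV. \<Sum>a\<in>UNIV. \<Sum>b\<in>UNIV. R a i i b * R b j j a) = real CARD('d) * L1^2"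
proof -
  have ric: "(\<Sum>i\<in>UNIV. R a i i b) = (if a = b then L1 else 0)" for a b :: 'd
    using Ric[of b a] curvature_tensor_pair_sym[OF C, of _ b a] by (simp add: eq_commute)
  have "(\<Sum>i\<in>UNIV. \<Sum>j\<in>UNIV. \<Sum>a\<in>UNIV. \<Sum>b\<in>UNIV. R a i i b * R b j j a)
      = (\<Sum>a\<in>UNIV. \<Sum>b::'d\<in>UNIV. (\<Sum>i\<in>UNIV. R a i i b) * (\<Sum>j\<in>UNIV. R b j j a))"
    by (subst sum4_swap_outer_inner) (simp add: sum_product)
  also have "\<dots> = (\<Sum>a::'d\<in>UNIV. L1 * L1)"
  proof -
    have "(if a = b then L1 else 0) * (if b = a then L1 else 0) = (if b = a then L1 * L1 else 0)" for a b :: 'd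
      by auto
    then show ?thesis by (simp add: ric)
  qed
  finally show ?thesis by (simp add: power2_eq_square)
qed

lemma sum_mult_swap_23:
  assumes C: "curvature_tensor R"
  shows "(\<Sum>a\<in>UNIV. \<Sum>i\<in>UNIV. \<Sum>j\<in>UNIV. \<Sum>b\<in>UNIV. R a i j b * R a j i b) = tensor_inner R R / 2"
proof -
  define X where "X = (\<Sum>a\<in>UNIV. \<Sum>i\<in>UNIV. \<Sum>j\<in>UNIV. \<Sum>b\<in>UNIV. R a i j b * R a j i b)"
  have bianchi: "R a i j b * R a i j b + R a i j b * R a j b i + R a i j b * R a b i j = 0" for a i j b
    using curvature_tensor_bianchi_234[OF C, of a i j b] by (metis distrib_left mult_zero_right)
  have skew: "R a i j b * R a j b i = - (R a i j b * R a j i b)" for a i j b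
    using curvature_tensor_skew_34[OF C, of a j b i] by simp
  have cycle: "(\<Sum>i\<in>UNIV. \<Sum>j\<in>UNIV. \<Sum>b\<in>UNIV. R a i j b * R a b i j)
      = (\<Sum>i\<in>UNIV. \<Sum>j\<in>UNIV. \<Sum>b\<in>UNIV. R a j b i * R a i j b)" for a
  proof -
    have "(\<Sum>i\<in>UNIV. \<Sum>j\<in>UNIV. \<Sum>b\<in>UNIV. R a j b i * R a i j b)
        = (\<Sum>j\<in>UNIV. \<Sum>b\<in>UNIV. \<Sum>i\<in>UNIV. R a j b i * R a i j b)"
      by (subst sum.swap, rule sum.cong[OF refl], rule sum.swap)
    then show ?thesis by (simp add: mult.commute)
  qed
  have "0 = (\<Sum>a\<in>UNIV. \<Sum>i\<in>UNIV. \<Sum>j\<in>UNIV. \<Sum>b\<in>UNIV.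
      R a i j b * R a i j b + R a i j b * R a j b i + R a i j b * R a b i j)"
    by (simp add: bianchi)
  also have "\<dots> = tensor_inner R R + (\<Sum>a\<in>UNIV. \<Sum>i\<in>UNIV. \<Sum>j\<in>UNIV. \<Sum>b\<in>UNIV. R a i j b * R a j b i)
      + (\<Sum>a\<in>UNIV. \<Sum>i\<in>UNIV. \<Sum>j\<in>UNIV. \<Sum>b\<in>UNIV. R a i j b * R a b i j)"
    by (simp add: sum.distrib tensor_inner_def)
  also have "\<dots> = tensor_inner R R - X - X"
    unfolding cycle X_def by (simp add: skew mult.commute sum_negf)
  finally show ?thesis unfolding X_def[symmetric] by simp
qed

lemma sum_symmetrized_square:
  assumes C: "curvature_tensor R"
  shows "(\<Sum>i\<in>UNIV. \<Sum>j\<in>UNIV. \<Sum>a\<in>UNIV. \<Sum>b\<in>UNIV.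
       (R a i j b + R a j i b) * (R b i j a + R b j i a)) = 3 * tensor_inner R R"
proof -
  have pair: "R b i j a = R a j i b" for a b i j
    using curvature_tensor_pair_sym[OF C, of j a b i] curvature_tensor_skew_12[OF C, of j a b i]
      curvature_tensor_skew_34[OF C, of a j b i] by simp
  have "(\<Sum>i\<in>UNIV. \<Sum>j\<in>UNIV. \<Sum>a\<in>UNIV. \<Sum>b\<in>UNIV.
       (R a i j b + R a j i b) * (R b i j a + R b j i a))
      = (\<Sum>a\<in>UNIV. \<Sum>i\<in>UNIV. \<Sum>j\<in>UNIV. \<Sum>b\<in>UNIV.
       R a i j b * R a i j b + R a j i b * R a j i b + 2 * (R a i j b * R a j i b))"
    by (subst sum.swap, subst sum.cong[OF refl sum.swap], rule sum.cong[OF refl])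
      (simp add: pair algebra_simps)
  also have "\<dots> = tensor_inner R R + (\<Sum>a\<in>UNIV. \<Sum>i\<in>UNIV. \<Sum>j\<in>UNIV. \<Sum>b\<in>UNIV. R a j i b * R a j i b)
        + 2 * (\<Sum>a\<in>UNIV. \<Sum>i\<in>UNIV. \<Sum>j\<in>UNIV. \<Sum>b\<in>UNIV. R a i j b * R a j i b)"
    by (simp add: tensor_inner_def sum.distrib sum_distrib_left)
  also have "(\<Sum>a\<in>UNIV. \<Sum>i\<in>UNIV. \<Sum>j\<in>UNIV. \<Sum>b\<in>UNIV. R a j i b * R a j i b) = tensor_inner R R"
    unfolding tensor_inner_def by (rule sum.cong[OF refl], rule sum.swap)
  finally show ?thesis using sum_mult_swap_23[OF C] by simp
qed

lemma quartic_trace_identity: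
  assumes C: "curvature_tensor R"
    and Ric: "\<And>i j. (\<Sum>a\<in>UNIV. R a i j a) = (if i = j then L1 else 0)"
    and Q: "\<forall>x::real^'d::finite. jacobi_sq_trace R x = L2 * norm x ^ 4"
  shows "2 * real CARD('d) * L1^2 + 3 * tensor_inner R R = L2 * (2 * real CARD('d)^2 + 4 * real CARD('d))"
proof -
  have swap_ij: "(\<Sum>i\<in>UNIV. \<Sum>j\<in>UNIV. \<Sum>a\<in>UNIV. \<Sum>b\<in>UNIV. R a j j b * R b i i a)
      = (\<Sum>i\<in>UNIV. \<Sum>j\<in>UNIV. \<Sum>a\<in>UNIV. \<Sum>b\<in>UNIV. R a i i b * R b j j a)"
    by (rule sum.swap)
  have "(\<Sum>i\<in>UNIV. \<Sum>j\<in>UNIV. \<Sum>a\<in>UNIV. \<Sum>b\<in>UNIV. R a i i b * R b j j a + R a j j b * R b i i a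
     + (R a i j b + R a j i b) * (R b i j a + R b j i a)) = 2 * real CARD('d) * L1^2 + 3 * tensor_inner R R"
    unfolding sum.distrib swap_ij by (simp add: sum_ricci_products[OF C Ric] sum_symmetrized_square[OF C])
  moreover have "(\<Sum>i\<in>UNIV. \<Sum>j::'d\<in>UNIV. L2 * (2 + 4 * (if i = j then 1 else 0)))
      = L2 * (2 * real CARD('d)^2 + 4 * real CARD('d))"
    by (simp add: sum.distrib sum_distrib_left[symmetric] power2_eq_square algebra_simps)
  ultimately show ?thesis
    by (simp add: jacobi_sq_trace_frame_polarization[OF Q])
qed

section \<open>The defect from constant holomorphic sectional curvature\<close>

text \<open>The coefficient of the model tensor is the orthogonal projection coefficient
  \<open>\<langle>R, R\<^sub>0\<rangle> / \<langle>R\<^sub>0, R\<^sub>0\<rangle> = 8\<tau> / (8m(m+2))\<close>.\<close>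

definition holo_defect ::
  "('d::finite \<Rightarrow> 'd \<Rightarrow> 'd \<Rightarrow> 'd \<Rightarrow> real) \<Rightarrow> (real^'d \<Rightarrow> real^'d) \<Rightarrow> 'd \<Rightarrow> 'd \<Rightarrow> 'd \<Rightarrow> 'd \<Rightarrow> real" where
  "holo_defect R J = (\<lambda>a b c d. R a b c d -
     scalar_curv R / (real CARD('d) * (real CARD('d) + 2)) * holo_model J a b c d)"

lemma tensor_inner_holo_defect:
  fixes R :: "'d::finite \<Rightarrow> 'd \<Rightarrow> 'd \<Rightarrow> 'd \<Rightarrow> real"
  assumes K: "kaehler_curvature R J"
  shows "tensor_inner (holo_defect R J) (holo_defect R J) =
    tensor_inner R R - 8 * scalar_curv R ^ 2 / (real CARD('d) * (real CARD('d) + 2))"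
proof -
  define m where "m = real CARD('d)"
  define \<nu> where "\<nu> = scalar_curv R / (m * (m + 2))"
  have "m * (m + 2) \<noteq> 0" unfolding m_def by simp
  then have \<nu>: "\<nu> * (m * (m + 2)) = scalar_curv R" unfolding \<nu>_def by simp
  have "tensor_inner (holo_defect R J) (holo_defect R J) =
      tensor_inner R R - 2 * \<nu> * (8 * scalar_curv R) + \<nu>^2 * (8 * m * (m + 2))"
    unfolding holo_defect_def m_def[symmetric] \<nu>_def[symmetric] tensor_inner_self_diff_scale
    using tensor_inner_holo_model[OF K] tensor_inner_holo_model_self[OF kaehler_hermitian[OF K]]
    by (simp add: m_def)
  moreover have "\<nu>^2 * (8 * m * (m + 2)) = 8 * (\<nu> * scalar_curv R)"
    unfolding \<nu>[symmetric] by (simp add: power2_eq_square)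
  moreover have "\<nu> * scalar_curv R = scalar_curv R ^ 2 / (m * (m + 2))"
    unfolding \<nu>_def by (simp add: power2_eq_square)
  ultimately show ?thesis unfolding m_def[symmetric] by (simp add: algebra_simps)
qed

lemma const_holo_sec_curv_iff_holo_defect_eq_0:
  fixes R :: "'d::finite \<Rightarrow> 'd \<Rightarrow> 'd \<Rightarrow> 'd \<Rightarrow> real"
  assumes K: "kaehler_curvature R J"
  shows "const_holo_sec_curv R J (4 * scalar_curv R / (real CARD('d) * (real CARD('d) + 2)))
    \<longleftrightarrow> tensor_inner (holo_defect R J) (holo_defect R J) = 0"
proof -
  define \<nu> where "\<nu> = scalar_curv R / (real CARD('d) * (real CARD('d) + 2))"
  have H: "hermitian_structure J" by (rule kaehler_hermitian[OF K])
  have KD: "kaehler_curvature (holo_defect R J) J"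
    unfolding holo_defect_def by (rule kaehler_curvature_diff_scale[OF K holo_model_kaehler[OF H]])
  have holo_D: "Rform (holo_defect R J) x (J x) (J x) x = Rform R x (J x) (J x) x - 4 * \<nu> * norm x ^ 4" for x
    unfolding holo_defect_def \<nu>_def[symmetric] Rform_tensor_diff_scale Rform_holo_model[OF H]
    by (simp add: holo_model_form_holomorphic[OF H])
  have "const_holo_sec_curv R J (4 * \<nu>) \<longleftrightarrow> (\<forall>x. Rform (holo_defect R J) x (J x) (J x) x = 0)"
    unfolding const_holo_sec_curv_def holo_D by simp
  also have "\<dots> \<longleftrightarrow> (\<forall>a b c d. holo_defect R J a b c d = 0)"
  proof
    assume "\<forall>x. Rform (holo_defect R J) x (J x) (J x) x = 0"
    then show "\<forall>a b c d. holo_defect R J a b c d = 0"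
      using curvature_tensor_eq_0_if_sectional_0[OF kaehler_curvature_tensor[OF KD]]
        kaehler_sectional_0_if_holomorphic_0[OF KD] by blast
  next
    assume "\<forall>a b c d. holo_defect R J a b c d = 0"
    then have "holo_defect R J = (\<lambda>a b c d. 0)" by (intro ext) simp
    then show "\<forall>x. Rform (holo_defect R J) x (J x) (J x) x = 0" by (simp add: Rform_tensor_zero)
  qed
  finally show ?thesis
    unfolding tensor_inner_self_eq_0_iff \<nu>_def by (simp add: mult.assoc)
qed

lemma quartic_relation_elimination:
  fixes n L1 L2 N D :: real
  assumes n: "n > 0" and quartic: "4 * n * L1^2 + 3 * N = L2 * (8 * n * (n + 1))"
    and defect: "N = D + 8 * n * L1^2 / (n + 1)"
  shows "L1^2 - 2 * (n + 1)^2 / (n + 7) * L2 = - (3 * (n + 1) / (4 * n * (n + 7))) * D"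
proof -
  define b c where "b = n + 1" and "c = n + 7"
  have nz: "b \<noteq> 0" "c \<noteq> 0" "n \<noteq> 0" using n unfolding b_def c_def by simp_all
  have L2: "L2 = (4 * n * L1^2 + 3 * N) / (8 * n * b)"
    using quartic nz unfolding b_def[symmetric] by (simp add: eq_divide_eq)
  show ?thesis
    unfolding L2 defect b_def[symmetric] c_def[symmetric] using nz
    by (simp add: field_simps) (simp add: b_def c_def algebra_simps power2_eq_square)
qed

lemma asymptotic_harmonic2_holo_defect_identity:
  fixes R :: "('p,'d::finite) curv"
  assumes ah: "asymptotic_harmonic2 M R L1 L2" and p: "p \<in> M"
    and K: "kaehler_curvature (R p) J" and dim: "CARD('d) = 2 * n"
  shows "L1\<^sup>2 - 2 * (real n + 1)\<^sup>2 / (real n + 7) * L2 =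
    - (3 * (real n + 1) / (4 * real n * (real n + 7))) * tensor_inner (holo_defect (R p) J) (holo_defect (R p) J)"
proof -
  have C: "curvature_tensor (R p)" by (rule kaehler_curvature_tensor[OF K])
  have n: "real n > 0" using dim by (metis of_nat_0_less_iff zero_less_card_finite nat_0_less_mult_iff)
  have m: "real CARD('d) = 2 * real n" using dim by simp
  have nz: "real n \<noteq> 0" "real n + 1 \<noteq> 0" "real n + 7 \<noteq> 0" using n by simp_all
  have L: "\<forall>x::real^'d. (\<Sum>a\<in>UNIV. Rform (R p) (frame a) x x (frame a)) = L1 * norm x ^ 2"
    and Q: "\<forall>x::real^'d. jacobi_sq_trace (R p) x = L2 * norm x ^ 4"
    using ah p unfolding asymptotic_harmonic2_def jacobi_sq_trace_def by blast+
  have Ric: "\<And>i j. (\<Sum>a\<in>UNIV. R p a i j a) = (if i = j then L1 else 0)"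
    by (rule ricci_eq_delta[OF C L])
  define N where "N = tensor_inner (R p) (R p)"
  define D where "D = tensor_inner (holo_defect (R p) J) (holo_defect (R p) J)"
  have quartic: "4 * real n * L1^2 + 3 * N = L2 * (8 * real n * (real n + 1))"
    using quartic_trace_identity[OF C Ric Q] unfolding m N_def by (simp add: algebra_simps power2_eq_square)
  have defect: "N = D + 8 * real n * L1^2 / (real n + 1)"
  proof -
    have "8 * (2 * real n * L1)^2 = (4 * real n) * (8 * real n * L1^2)"
      and "2 * real n * (2 * real n + 2) = (4 * real n) * (real n + 1)"
      by (simp_all add: power2_eq_square algebra_simps)
    then have "8 * (2 * real n * L1)^2 / (2 * real n * (2 * real n + 2)) = 8 * real n * L1^2 / (real n + 1)"
      using nz by (simp only: mult_divide_mult_cancel_left)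
    then show ?thesis
      using tensor_inner_holo_defect[OF K]
      unfolding scalar_curv_eq_if_ricci_eq_delta[of "R p" L1, OF Ric] m N_def[symmetric] D_def[symmetric]
      by (simp add: mult.assoc)
  qed
  show ?thesis
    using quartic_relation_elimination[OF n quartic defect] unfolding D_def .
qed

theorem theorem6p4:
  fixes M :: "'p set" and R :: "('p,'d::finite) curv" and J :: "'p \<Rightarrow> real^'d \<Rightarrow> real^'d"
    and n :: nat and L1 L2 :: real
  assumes dim: "CARD('d) = 2 * n"
    and nonempty: "M \<noteq> {}"
    and kaehler: "\<forall>p\<in>M. kaehler_curvature (R p) (J p)"
    and ah: "asymptotic_harmonic2 M R L1 L2"
  shows "L1\<^sup>2 - 2 * (real n + 1)\<^sup>2 / (real n + 7) * L2 \<le> 0 \<and>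
    (L1\<^sup>2 - 2 * (real n + 1)\<^sup>2 / (real n + 7) * L2 = 0 \<longleftrightarrow>
      (\<forall>p\<in>M. const_holo_sec_curv (R p) (J p)
                 (scalar_curv (R p) / (real n * (real n + 1)))))"
proof -
  define E where "E = L1\<^sup>2 - 2 * (real n + 1)\<^sup>2 / (real n + 7) * L2"
  define c where "c = 3 * (real n + 1) / (4 * real n * (real n + 7))"
  define \<delta> where "\<delta> p = tensor_inner (holo_defect (R p) (J p)) (holo_defect (R p) (J p))" for p
  have "real n > 0" using dim by (metis of_nat_0_less_iff zero_less_card_finite nat_0_less_mult_iff)
  then have "c > 0" unfolding c_def by simp
  have identity: "E = - c * \<delta> p" if "p \<in> M" for p
    unfolding E_def c_def \<delta>_def
    using asymptotic_harmonic2_holo_defect_identity[OF ah that] kaehler that dim by blast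
  have holo_iff: "const_holo_sec_curv (R p) (J p) (scalar_curv (R p) / (real n * (real n + 1))) \<longleftrightarrow> \<delta> p = 0"
    if "p \<in> M" for p
  proof -
    have "real CARD('d) * (real CARD('d) + 2) = 4 * (real n * (real n + 1))"
      unfolding dim by (simp add: algebra_simps)
    then have "4 * scalar_curv (R p) / (real CARD('d) * (real CARD('d) + 2)) = scalar_curv (R p) / (real n * (real n + 1))"
      by simp
    then show ?thesis
      using const_holo_sec_curv_iff_holo_defect_eq_0[of "R p" "J p"] kaehler that unfolding \<delta>_def by simp
  qed
  obtain p0 where "p0 \<in> M" using nonempty by blast
  have "\<delta> p0 \<ge> 0" unfolding \<delta>_def by (rule tensor_inner_self_nonneg)
  then have "E \<le> 0" using identity[OF \<open>p0 \<in> M\<close>] \<open>c > 0\<close> by simp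
  moreover have "E = 0 \<longleftrightarrow> (\<forall>p\<in>M. \<delta> p = 0)"
  proof
    assume "E = 0"
    then show "\<forall>p\<in>M. \<delta> p = 0" using identity \<open>c > 0\<close> by simp
  next
    assume "\<forall>p\<in>M. \<delta> p = 0"
    then show "E = 0" using identity[OF \<open>p0 \<in> M\<close>] \<open>p0 \<in> M\<close> by simp
  qed
  ultimately show ?thesis
    using holo_iff unfolding E_def by simp
qed

end
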